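(* Assume $\mathcal S\subseteq\mathcal D$. Let $F\in\mathbb R^{d\times s}$, $H=BFC$, $\bar F=F\bar C$, $\bar H=\bar B\bar F$, and consider the closed-loop systems $e[k+1]=(I_{2n}-H)e[k]$ (closed loop of $\Sigma^1$ under $u=-Fy$) and $\bar e[k+1]=(I_s-\bar H)\bar e[k]$ (closed loop of $\Sigma^2$ under $u=-\bar F\bar e$). Suppose every eigenvalue $\lambda$ of $\bar H$ satisfies $|\lambda-1|<1$. Then: (i) every trajectory of $\bar e[k+1]=(I_s-\bar H)\bar e[k]$ converges to $0$ exponentially; (ii) the system $e[k+1]=(I_{2n}-H)e[k]$ is stable in the sense of Lyapunov (all trajectories remain bounded; equivalently all eigenvalues of $I_{2n}-H$ have modulus at most $1$ and those of modulus $1$ are semisimple); (iii) for every trajectory of $e[k+1]=(I_{2n}-H)e[k]$ and every $p\in\mathcal S$, the component $e_p[k]$ converges to $0$ exponentially.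
   Context: Standing setup. Let $n\ge 1$ and consider a radial distribution network modeled as a tree with root node $0$ (the substation), non-root nodes $\mathcal N=\{1,\dots,n\}$, and edge set $\mathcal L$; each edge $(i,j)\in\mathcal L$ has resistance $r_{ij}\in\mathbb R$ and reactance $x_{ij}\in\mathbb R$. For a node $i$, $\mathcal L_i$ denotes the set of edges on the unique path from node $0$ to node $i$. Define $R^0,X^0\in\mathbb R^{n\times n}$ by $R^0_{ij}=2\sum_{(w,t)\in\mathcal L_i\cap\mathcal L_j} r_{wt}$ and $X^0_{ij}=2\sum_{(w,t)\in\mathcal L_i\cap\mathcal L_j} x_{wt}$. Let $\mathcal D_1\subseteq\mathcal N$ (nodes with a DER) and $\mathcal S_1\subseteq\mathcal N$ (nodes with a sensor) be nonempty, listed in increasing order; let $\mathcal D_2=\{i+n: i\in\mathcal D_1\}$, $\mathcal S_2=\{i+n:i\in\mathcal S_1\}$, $\mathcal D=\mathcal D_1\cup\mathcal D_2$, $\mathcal S=\mathcal S_1\cup\mathcal S_2$ (subsets of $\{1,\dots,2n\}$, listed in increasing order), $d=|\mathcal D|$, $s=|\mathcal S|$, $\overline{\mathcal D}=\{1,\dots,2n\}\setminus\mathcal D$, $\overline{\mathcal S}=\{1,\dots,2n\}\setminus\mathcal S$. For an increasingly ordered set $\Omega=\{i_1,\dots,i_g\}\subseteq\{1,\dots,c\}$, let $\Gamma_c(\Omega)=[\mathfrak e_{i_1}\ \cdots\ \mathfrak e_{i_g}]\in\mathbb R^{c\times g}$, where $\mathfrak e_\omega$ is the $\omega$-th standard basis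 vector of $\mathbb R^c$. Set $T^d=\Gamma_n(\mathcal D_1)$, $R=R^0T^d$, $X=X^0T^d\in\mathbb R^{n\times d/2}$, $T^s=\Gamma_{2n}(\mathcal S)^\top\in\mathbb R^{s\times 2n}$, and $A=I_{2n}$, $B=\begin{bmatrix}X & R\\ -\tfrac12 R & \tfrac12 X\end{bmatrix}\in\mathbb R^{2n\times d}$, $C=T^s$. The system $\Sigma^1$ is $e[k+1]=Ae[k]+Bu[k]$, $y[k]=Ce[k]$ with state $e[k]\in\mathbb R^{2n}$, input $u[k]\in\mathbb R^d$, output $y[k]\in\mathbb R^s$. Define the permutation matrix $T=[\Gamma_{2n}(\mathcal S\cap\mathcal D),\ \Gamma_{2n}(\mathcal S\cap\overline{\mathcal D}),\ \Gamma_{2n}(\overline{\mathcal S}\cap\mathcal D),\ \Gamma_{2n}(\overline{\mathcal S}\cap\overline{\mathcal D})]\in\mathbb R^{2n\times 2n}$ (each intersection listed in increasing order) and $G=\Gamma_{2n}(\{1,\dots,s\})\in\mathbb R^{2n\times s}$. The reduced system $\Sigma^2$ has $\bar A=I_s$, $\bar B=G^\top T^{-1}B\in\mathbb R^{s\times d}$, $\bar C=CTG\in\mathbb R^{s\times s}$, and reduced state $\bar e=G^\top T^{-1}e\in\mathbb R^s$. *)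

theory Defs
  imports "Jordan_Normal_Form.Char_Poly" "Jordan_Normal_Form.Gauss_Jordan_Elimination"
begin

(* The edges are (par i, i), i = 1..n; r i, x i are the resistance / reactance of the
   edge (par i, i).
   JNF matrices/vectors are 0-indexed: paper index i (1-based) corresponds to JNF index i-1. *)

definition is_rooted_tree :: "nat \<Rightarrow> (nat \<Rightarrow> nat) \<Rightarrow> bool" where
  "is_rooted_tree n par \<longleftrightarrow> par 0 = 0 \<and> (\<forall>i\<in>{1..n}. par i \<le> n) \<and>
     (\<forall>i\<in>{1..n}. \<exists>k. (par ^^ k) i = 0)"

(* non-root nodes on the path from 0 to i; the edges of L_i are (par w, w) for w in this set *)
definition path_nodes :: "(nat \<Rightarrow> nat) \<Rightarrow> nat \<Rightarrow> nat set" where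
  "path_nodes par i = {(par ^^ k) i | k. True} - {0}"

definition path_mat :: "nat \<Rightarrow> (nat \<Rightarrow> nat) \<Rightarrow> (nat \<Rightarrow> real) \<Rightarrow> real mat" where
  "path_mat n par r = mat n n (\<lambda>(i, j). 2 * (\<Sum>w \<in> path_nodes par (i+1) \<inter> path_nodes par (j+1). r w))"

(* Gamma for a list of (1-based) indices: column b is the standard basis vector e_{xs!b} *)
definition GammaL :: "nat \<Rightarrow> nat list \<Rightarrow> real mat" where
  "GammaL c xs = mat c (length xs) (\<lambda>(a, b). if a + 1 = xs ! b then 1 else 0)"

definition Gamma :: "nat \<Rightarrow> nat set \<Rightarrow> real mat" where
  "Gamma c \<Omega> = GammaL c (sorted_list_of_set \<Omega>)"

definition Dset :: "nat \<Rightarrow> nat set \<Rightarrow> nat set" where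
  "Dset n D1 = D1 \<union> (\<lambda>i. i + n) ` D1"

definition Bmat :: "nat \<Rightarrow> (nat \<Rightarrow> nat) \<Rightarrow> (nat \<Rightarrow> real) \<Rightarrow> (nat \<Rightarrow> real) \<Rightarrow> nat set \<Rightarrow> real mat" where
  "Bmat n par r x D1 =
     (let Td = Gamma n D1; R = path_mat n par r * Td; X = path_mat n par x * Td
      in four_block_mat X R ((-1/2) \<cdot>\<^sub>m R) ((1/2) \<cdot>\<^sub>m X))"

definition Cmat :: "nat \<Rightarrow> nat set \<Rightarrow> real mat" where
  "Cmat n S1 = transpose_mat (Gamma (2*n) (Dset n S1))"

definition Tmat :: "nat \<Rightarrow> nat set \<Rightarrow> nat set \<Rightarrow> real mat" where
  "Tmat n D1 S1 =
     (let D = Dset n D1; S = Dset n S1; U = {1..2*n}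
      in GammaL (2*n) (sorted_list_of_set (S \<inter> D) @ sorted_list_of_set (S \<inter> (U - D)) @
                       sorted_list_of_set ((U - S) \<inter> D) @ sorted_list_of_set ((U - S) \<inter> (U - D))))"

definition Gmat :: "nat \<Rightarrow> nat \<Rightarrow> real mat" where
  "Gmat n s = Gamma (2*n) {1..s}"

definition Bbar :: "nat \<Rightarrow> (nat \<Rightarrow> nat) \<Rightarrow> (nat \<Rightarrow> real) \<Rightarrow> (nat \<Rightarrow> real) \<Rightarrow> nat set \<Rightarrow> nat set \<Rightarrow> real mat" where
  "Bbar n par r x D1 S1 =
     transpose_mat (Gmat n (card (Dset n S1))) * the (mat_inverse (Tmat n D1 S1)) * Bmat n par r x D1"

definition Cbar :: "nat \<Rightarrow> nat set \<Rightarrow> nat set \<Rightarrow> real mat" where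
  "Cbar n D1 S1 = Cmat n S1 * Tmat n D1 S1 * Gmat n (card (Dset n S1))"

definition is_traj :: "nat \<Rightarrow> real mat \<Rightarrow> (nat \<Rightarrow> real vec) \<Rightarrow> bool" where
  "is_traj m M e \<longleftrightarrow> (\<forall>k. e k \<in> carrier_vec m \<and> e (Suc k) = M *\<^sub>v e k)"

definition exp_conv :: "(nat \<Rightarrow> real) \<Rightarrow> bool" where
  "exp_conv f \<longleftrightarrow> (\<exists>c \<rho>. 0 \<le> \<rho> \<and> \<rho> < 1 \<and> (\<forall>k. \<bar>f k\<bar> \<le> c * \<rho> ^ k))"

end

theory Submission
  imports Defs "Jordan_Normal_Form.Spectral_Radius"
begin

text \<open>Because every sensed coordinate is also actuated, the permutation \<open>T\<close> lists the sensed
  coordinates first; hence the reduced output matrix is the identity and the reduced loop gain is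
  \<open>C B F\<close>. So the reduced closed loop is nothing but the evolution of the measurement \<open>y = C e\<close> of
  the full closed loop, \<open>y[k+1] = (I - C B F) y[k]\<close>. The eigenvalue hypothesis places the spectrum of
  \<open>I - C B F\<close> in the open unit disc, so its powers decay geometrically, which gives (i) and, via
  \<open>y = C e\<close>, (iii). The full state moves only by the increments \<open>e[k+1] - e[k] = - B F y[k]\<close>, which
  are geometrically summable; hence \<open>e[k]\<close> stays within a fixed multiple of the size of \<open>e[0]\<close>,
  which is (ii).\<close>

section \<open>Geometric decay of matrix powers\<close>

lemma smult_pow_mat:
  assumes A: "(A :: 'a :: comm_ring_1 mat) \<in> carrier_mat n n"
  shows "(a \<cdot>\<^sub>m A) ^\<^sub>m k = a ^ k \<cdot>\<^sub>m A ^\<^sub>m k"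
proof (induction k)
  case (Suc k)
  have "(a \<cdot>\<^sub>m A) ^\<^sub>m Suc k = (a ^ k \<cdot>\<^sub>m A ^\<^sub>m k) * (a \<cdot>\<^sub>m A)" using Suc by simp
  also have "\<dots> = a ^ k \<cdot>\<^sub>m (a \<cdot>\<^sub>m (A ^\<^sub>m k * A))"
    using A by (simp add: mult_smult_assoc_mat[OF pow_carrier_mat[OF A] smult_carrier_mat[OF A]]
        mult_smult_distrib[OF pow_carrier_mat[OF A] A])
  also have "\<dots> = a ^ Suc k \<cdot>\<^sub>m A ^\<^sub>m Suc k" by (intro eq_matI) (auto simp: mult.commute)
  finally show ?case .
qed (use A in \<open>intro eq_matI, auto\<close>)

lemma norm_bound_smult:
  fixes A :: "'a :: real_normed_field mat"
  assumes "norm_bound A b"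
  shows "norm_bound (a \<cdot>\<^sub>m A) (norm a * b)"
  using assms unfolding norm_bound_def by (auto simp: norm_mult intro: mult_left_mono)

lemma eigenvalue_smult_mat:
  assumes A: "A \<in> carrier_mat n n" and ev: "eigenvalue A mu"
  shows "eigenvalue (a \<cdot>\<^sub>m A) (a * mu)"
proof -
  from ev obtain v where v: "v \<in> carrier_vec n" "v \<noteq> 0\<^sub>v n" "A *\<^sub>v v = mu \<cdot>\<^sub>v v"
    using A unfolding eigenvalue_def eigenvector_def by auto
  have "(a \<cdot>\<^sub>m A) *\<^sub>v v = a \<cdot>\<^sub>v (A *\<^sub>v v)"
    using v(1) A by (intro eq_vecI) (auto simp: scalar_prod_def sum_distrib_left ac_simps)
  also have "\<dots> = (a * mu) \<cdot>\<^sub>v v" by (simp add: v(3) smult_smult_assoc)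
  finally have "(a \<cdot>\<^sub>m A) *\<^sub>v v = (a * mu) \<cdot>\<^sub>v v" .
  with v A show ?thesis unfolding eigenvalue_def eigenvector_def by auto
qed

lemma eigenvalue_one_minus_mat:
  assumes A: "(A :: 'a :: comm_ring_1 mat) \<in> carrier_mat n n" and ev: "eigenvalue (1\<^sub>m n - A) mu"
  shows "eigenvalue A (1 - mu)"
proof -
  from ev obtain v where v: "v \<in> carrier_vec n" "v \<noteq> 0\<^sub>v n" "(1\<^sub>m n - A) *\<^sub>v v = mu \<cdot>\<^sub>v v"
    using A unfolding eigenvalue_def eigenvector_def by auto
  have "A *\<^sub>v v = (1 - mu) \<cdot>\<^sub>v v"
  proof (rule eq_vecI)
    fix i assume "i < dim_vec ((1 - mu) \<cdot>\<^sub>v v)"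
    with v(1) have i: "i < n" by simp
    from arg_cong[OF v(3), of "\<lambda>w. w $ i"] i v(1) A
    have "v $ i - (A *\<^sub>v v) $ i = mu * v $ i"
      by (simp add: minus_mult_distrib_mat_vec[OF one_carrier_mat A v(1)])
    thus "(A *\<^sub>v v) $ i = ((1 - mu) \<cdot>\<^sub>v v) $ i" using i v(1) by (simp add: algebra_simps)
  qed (use v A in auto)
  with v A show ?thesis unfolding eigenvalue_def eigenvector_def by auto
qed

lemma cmod_eigenvalue_one_minus_lt_1:
  assumes H: "(H :: real mat) \<in> carrier_mat n n"
    and ev: "\<And>mu. eigenvalue (map_mat complex_of_real H) mu \<Longrightarrow> cmod (mu - 1) < 1"
    and mu: "eigenvalue (map_mat complex_of_real (1\<^sub>m n - H)) mu"
  shows "cmod mu < 1"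
proof -
  have "map_mat complex_of_real (1\<^sub>m n - H) = 1\<^sub>m n - map_mat complex_of_real H"
    using H by (intro eq_matI) auto
  with mu eigenvalue_one_minus_mat[of "map_mat complex_of_real H" n mu] H
  have "eigenvalue (map_mat complex_of_real H) (1 - mu)" by simp
  from ev[OF this] show ?thesis by (simp add: norm_minus_commute)
qed

lemma pow_mat_exp_decay:
  assumes A: "(A :: complex mat) \<in> carrier_mat n n"
    and ev: "\<And>mu. eigenvalue A mu \<Longrightarrow> norm mu < 1"
  shows "\<exists>c \<rho>. 0 \<le> c \<and> 0 \<le> \<rho> \<and> \<rho> < 1 \<and> (\<forall>k. norm_bound (A ^\<^sub>m k) (c * \<rho> ^ k))"
proof (cases "n = 0")
  case True
  with A show ?thesis by (intro exI[of _ 0] exI[of _ 0]) (auto simp: norm_bound_def)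
next
  case False
  hence n: "n > 0" by simp
  define sr where "sr = spectral_radius A"
  from spectral_radius_mem_max(1)[OF A n] ev have sr: "0 \<le> sr" "sr < 1"
    unfolding sr_def spectrum_def by auto
  define \<rho> where "\<rho> = (1 + sr) / 2"
  have \<rho>: "0 < \<rho>" "\<rho> < 1" "sr < \<rho>" using sr unfolding \<rho>_def by auto
  define A' where "A' = complex_of_real (1 / \<rho>) \<cdot>\<^sub>m A"
  have A': "A' \<in> carrier_mat n n" using A unfolding A'_def by simp
  have A_A': "A = complex_of_real \<rho> \<cdot>\<^sub>m A'"
    using A \<rho>(1) unfolding A'_def by (intro eq_matI) auto
  \<comment> \<open>Since \<open>\<rho>\<close> lies strictly between the spectral radius and 1, dividing by \<open>\<rho>\<close> keeps the
    spectrum in the open unit disc, and the powers change only by the factor \<open>\<rho> ^ k\<close>.\<close>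
  have "spectral_radius A' < 1"
  proof -
    from spectral_radius_mem_max(1)[OF A' n] obtain mu
      where mu: "eigenvalue A' mu" "spectral_radius A' = norm mu"
      unfolding spectrum_def by auto
    from eigenvalue_smult_mat[OF A' mu(1), of "complex_of_real \<rho>", folded A_A']
    have "norm (complex_of_real \<rho> * mu) \<le> sr"
      unfolding sr_def by (intro spectral_radius_mem_max(2)[OF A n]) (auto simp: spectrum_def)
    moreover have "norm (complex_of_real \<rho> * mu) = \<rho> * norm mu" using \<rho>(1) by (simp add: norm_mult)
    ultimately have "\<rho> * norm mu < \<rho>" using \<rho>(3) by linarith
    with mu(2) \<rho>(1) show ?thesis by simp
  qed
  from spectral_radius_jnf_norm_bound_less_1_upper_triangular[OF A' this]
  obtain c where c: "\<And>k. norm_bound (A' ^\<^sub>m k) c" by auto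
  have "0 \<le> c"
    using c[of 0] A' n unfolding norm_bound_def by (metis norm_ge_zero order_trans pow_mat_dim_square)
  moreover have "norm_bound (A ^\<^sub>m k) (c * \<rho> ^ k)" for k
    using norm_bound_smult[OF c[of k], of "complex_of_real \<rho> ^ k"] \<rho>(1)
    unfolding A_A' smult_pow_mat[OF A'] by (simp add: norm_power mult.commute)
  ultimately show ?thesis using \<rho> by (intro exI[of _ c] exI[of _ \<rho>]) auto
qed

lemma pow_mat_exp_decay_real:
  assumes A: "(A :: real mat) \<in> carrier_mat n n"
    and ev: "\<And>mu. eigenvalue (map_mat complex_of_real A) mu \<Longrightarrow> cmod mu < 1"
  shows "\<exists>c \<rho>. 0 \<le> c \<and> 0 \<le> \<rho> \<and> \<rho> < 1 \<and> (\<forall>k. norm_bound (A ^\<^sub>m k) (c * \<rho> ^ k))"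
proof -
  have "map_mat complex_of_real A \<in> carrier_mat n n" using A by simp
  from pow_mat_exp_decay[OF this ev] obtain c \<rho> where "0 \<le> c" "0 \<le> \<rho>" "\<rho> < 1"
    and b: "\<And>k. norm_bound (map_mat complex_of_real A ^\<^sub>m k) (c * \<rho> ^ k)"
    by blast
  moreover have "norm_bound (A ^\<^sub>m k) (c * \<rho> ^ k)" for k
    using b[of k] unfolding of_real_hom.mat_hom_pow[OF A, symmetric] norm_bound_def by auto
  ultimately show ?thesis by blast
qed

section \<open>Trajectories\<close>

definition norm1 :: "real vec \<Rightarrow> real" where
  "norm1 v = (\<Sum>j<dim_vec v. \<bar>v $ j\<bar>)"

lemma norm1_nonneg: "0 \<le> norm1 v"
  unfolding norm1_def by (intro sum_nonneg) auto

lemma abs_index_le_norm1: "i < dim_vec v \<Longrightarrow> \<bar>v $ i\<bar> \<le> norm1 v"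
  unfolding norm1_def by (rule member_le_sum) auto

lemma abs_mult_mat_vec_index_le:
  assumes A: "(A :: real mat) \<in> carrier_mat nr nc" and v: "v \<in> carrier_vec nc"
    and i: "i < nr" and b: "norm_bound A b"
  shows "\<bar>(A *\<^sub>v v) $ i\<bar> \<le> b * norm1 v"
proof -
  have "\<bar>(A *\<^sub>v v) $ i\<bar> = \<bar>\<Sum>j<nc. A $$ (i, j) * v $ j\<bar>"
    using A v i by (simp add: scalar_prod_def atLeast0LessThan)
  also have "\<dots> \<le> (\<Sum>j<nc. \<bar>A $$ (i, j)\<bar> * \<bar>v $ j\<bar>)" by (rule order.trans[OF sum_abs]) (simp add: abs_mult)
  also have "\<dots> \<le> (\<Sum>j<nc. b * \<bar>v $ j\<bar>)"
    using A i b unfolding norm_bound_def by (intro sum_mono mult_right_mono) auto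
  also have "\<dots> = b * norm1 v" using v unfolding norm1_def by (simp add: sum_distrib_left)
  finally show ?thesis .
qed

lemma norm1_mult_mat_vec_le:
  assumes A: "(A :: real mat) \<in> carrier_mat nr nc" and v: "v \<in> carrier_vec nc" and b: "norm_bound A b"
  shows "norm1 (A *\<^sub>v v) \<le> real nr * b * norm1 v"
proof -
  have "norm1 (A *\<^sub>v v) = (\<Sum>i<nr. \<bar>(A *\<^sub>v v) $ i\<bar>)" using A unfolding norm1_def by simp
  also have "\<dots> \<le> (\<Sum>i<nr. b * norm1 v)" by (intro sum_mono abs_mult_mat_vec_index_le[OF A v _ b]) auto
  finally show ?thesis by simp
qed

lemma is_traj_carrier: "is_traj m M e \<Longrightarrow> e k \<in> carrier_vec m"
  unfolding is_traj_def by blast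

lemma is_traj_eq_pow_mat:
  assumes M: "M \<in> carrier_mat m m" and e: "is_traj m M e"
  shows "e (k + j) = M ^\<^sub>m k *\<^sub>v e j"
proof (induction k arbitrary: j)
  case 0
  show ?case using M is_traj_carrier[OF e] by simp
next
  case (Suc k)
  have "e (Suc k + j) = M ^\<^sub>m k *\<^sub>v (M *\<^sub>v e j)" using Suc[of "Suc j"] e unfolding is_traj_def by simp
  also have "\<dots> = M ^\<^sub>m Suc k *\<^sub>v e j"
    using assoc_mult_mat_vec[OF pow_carrier_mat[OF M] M is_traj_carrier[OF e]] by simp
  finally show ?case .
qed

lemma is_traj_exp_decay:
  assumes M: "M \<in> carrier_mat m m"
    and ev: "\<And>mu. eigenvalue (map_mat complex_of_real M) mu \<Longrightarrow> cmod mu < 1"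
  shows "\<exists>c \<rho>. 0 \<le> c \<and> 0 \<le> \<rho> \<and> \<rho> < 1 \<and>
    (\<forall>e k. is_traj m M e \<longrightarrow> norm1 (e k) \<le> c * \<rho> ^ k * norm1 (e 0))"
proof -
  obtain c \<rho> where "0 \<le> c" "0 \<le> \<rho>" "\<rho> < 1" and c: "\<And>k. norm_bound (M ^\<^sub>m k) (c * \<rho> ^ k)"
    using pow_mat_exp_decay_real[OF M ev] by blast
  moreover have "norm1 (e k) \<le> real m * c * \<rho> ^ k * norm1 (e 0)" if e: "is_traj m M e" for e k
    using norm1_mult_mat_vec_le[OF pow_carrier_mat[OF M] is_traj_carrier[OF e] c, of k]
    unfolding is_traj_eq_pow_mat[OF M e, of k 0, simplified] by (simp add: ac_simps)
  ultimately show ?thesis by (intro exI[of _ "real m * c"] exI[of _ \<rho>]) auto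
qed

lemma is_traj_exp_conv:
  assumes M: "M \<in> carrier_mat m m"
    and ev: "\<And>mu. eigenvalue (map_mat complex_of_real M) mu \<Longrightarrow> cmod mu < 1"
    and e: "is_traj m M e" and i: "i < m"
  shows "exp_conv (\<lambda>k. e k $ i)"
proof -
  obtain c \<rho> where "0 \<le> \<rho>" "\<rho> < 1" and c: "\<And>k. norm1 (e k) \<le> c * \<rho> ^ k * norm1 (e 0)"
    using is_traj_exp_decay[OF M ev] e by blast
  moreover have "\<bar>e k $ i\<bar> \<le> c * \<rho> ^ k * norm1 (e 0)" for k
    using abs_index_le_norm1[of i "e k"] is_traj_carrier[OF e, of k] i c[of k] by simp
  ultimately show ?thesis
    unfolding exp_conv_def by (intro exI[of _ "c * norm1 (e 0)"] exI[of _ \<rho>]) (auto simp: ac_simps)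
qed

section \<open>Output feedback\<close>

lemma norm_bound_nonneg_exists: "\<exists>b \<ge> 0. norm_bound A b"
  using norm_bound_max[of A] unfolding norm_bound_def
  by (intro exI[of _ "max 0 (Max {norm (A $$ (i,j)) | i j. i < dim_row A \<and> j < dim_col A})"]) force

lemma output_feedback_step:
  assumes K: "(K :: real mat) \<in> carrier_mat m s" and C: "C \<in> carrier_mat s m"
    and e: "is_traj m (1\<^sub>m m - K * C) e"
  shows "e (Suc k) = e k - K *\<^sub>v (C *\<^sub>v e k)"
proof -
  have ek: "e k \<in> carrier_vec m" by (rule is_traj_carrier[OF e])
  have "e (Suc k) = (1\<^sub>m m - K * C) *\<^sub>v e k" using e unfolding is_traj_def by blast
  also have "\<dots> = e k - (K * C) *\<^sub>v e k"
    using minus_mult_distrib_mat_vec[OF one_carrier_mat mult_carrier_mat[OF K C] ek] ek by simp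
  also have "(K * C) *\<^sub>v e k = K *\<^sub>v (C *\<^sub>v e k)" by (rule assoc_mult_mat_vec[OF K C ek])
  finally show ?thesis .
qed

lemma output_feedback_output_traj:
  assumes K: "(K :: real mat) \<in> carrier_mat m s" and C: "C \<in> carrier_mat s m"
    and e: "is_traj m (1\<^sub>m m - K * C) e"
  shows "is_traj s (1\<^sub>m s - C * K) (\<lambda>k. C *\<^sub>v e k)"
  unfolding is_traj_def
proof (intro allI conjI)
  fix k
  have ek: "e k \<in> carrier_vec m" by (rule is_traj_carrier[OF e])
  show Cek: "C *\<^sub>v e k \<in> carrier_vec s" using C ek by simp
  have "C *\<^sub>v e (Suc k) = C *\<^sub>v e k - C *\<^sub>v (K *\<^sub>v (C *\<^sub>v e k))"
    unfolding output_feedback_step[OF K C e] using K C ek by (simp add: mult_minus_distrib_mat_vec)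
  also have "\<dots> = C *\<^sub>v e k - (C * K) *\<^sub>v (C *\<^sub>v e k)"
    using assoc_mult_mat_vec[OF C K Cek] by simp
  also have "\<dots> = (1\<^sub>m s - C * K) *\<^sub>v (C *\<^sub>v e k)"
    using minus_mult_distrib_mat_vec[OF one_carrier_mat mult_carrier_mat[OF C K] Cek] Cek by simp
  finally show "C *\<^sub>v e (Suc k) = (1\<^sub>m s - C * K) *\<^sub>v (C *\<^sub>v e k)" .
qed

lemma output_feedback_increment_exp_decay:
  assumes K: "(K :: real mat) \<in> carrier_mat m s" and C: "C \<in> carrier_mat s m"
    and ev: "\<And>mu. eigenvalue (map_mat complex_of_real (1\<^sub>m s - C * K)) mu \<Longrightarrow> cmod mu < 1"
  shows "\<exists>c \<rho>. 0 \<le> c \<and> 0 \<le> \<rho> \<and> \<rho> < 1 \<and> (\<forall>e k i. is_traj m (1\<^sub>m m - K * C) e \<longrightarrow> i < m \<longrightarrow>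
    \<bar>(K *\<^sub>v (C *\<^sub>v e k)) $ i\<bar> \<le> c * \<rho> ^ k * norm1 (e 0))"
proof -
  have Mc: "1\<^sub>m s - C * K \<in> carrier_mat s s" using mult_carrier_mat[OF C K] by (rule minus_carrier_mat)
  obtain c \<rho> where c: "0 \<le> c" and \<rho>: "0 \<le> \<rho>" "\<rho> < 1"
    and decay: "\<And>y k. is_traj s (1\<^sub>m s - C * K) y \<Longrightarrow> norm1 (y k) \<le> c * \<rho> ^ k * norm1 (y 0)"
    using is_traj_exp_decay[OF Mc ev] by blast
  obtain bK bC where bK: "0 \<le> bK" "norm_bound K bK" and bC: "0 \<le> bC" "norm_bound C bC"
    using norm_bound_nonneg_exists by metis
  have "\<bar>(K *\<^sub>v (C *\<^sub>v e k)) $ i\<bar> \<le> (bK * c * (real s * bC)) * \<rho> ^ k * norm1 (e 0)"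
    if e: "is_traj m (1\<^sub>m m - K * C) e" and i: "i < m" for e k i
  proof -
    have ek: "e k \<in> carrier_vec m" for k by (rule is_traj_carrier[OF e])
    have "\<bar>(K *\<^sub>v (C *\<^sub>v e k)) $ i\<bar> \<le> bK * norm1 (C *\<^sub>v e k)"
      using C ek by (intro abs_mult_mat_vec_index_le[OF K _ i bK(2)]) auto
    also have "\<dots> \<le> bK * (c * \<rho> ^ k * norm1 (C *\<^sub>v e 0))"
      using decay[OF output_feedback_output_traj[OF K C e]] bK(1) by (intro mult_left_mono) auto
    also have "\<dots> \<le> bK * (c * \<rho> ^ k * (real s * bC * norm1 (e 0)))"
      using norm1_mult_mat_vec_le[OF C ek bC(2)] bK(1) c \<rho>(1)
      by (intro mult_left_mono) (auto simp: zero_le_mult_iff)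
    finally show ?thesis by (simp add: ac_simps)
  qed
  with c \<rho> bK(1) bC(1) show ?thesis by (intro exI[of _ "bK * c * (real s * bC)"] exI[of _ \<rho>]) auto
qed

lemma output_feedback_uniform_bound:
  assumes K: "(K :: real mat) \<in> carrier_mat m s" and C: "C \<in> carrier_mat s m"
    and ev: "\<And>mu. eigenvalue (map_mat complex_of_real (1\<^sub>m s - C * K)) mu \<Longrightarrow> cmod mu < 1"
  shows "\<exists>Q. \<forall>e k i. is_traj m (1\<^sub>m m - K * C) e \<longrightarrow> i < m \<longrightarrow> \<bar>e k $ i\<bar> \<le> Q * norm1 (e 0)"
proof -
  obtain c \<rho> where c: "0 \<le> c" and \<rho>: "0 \<le> \<rho>" "\<rho> < 1" and decay: "\<And>e k i.
    is_traj m (1\<^sub>m m - K * C) e \<Longrightarrow> i < m \<Longrightarrow> \<bar>(K *\<^sub>v (C *\<^sub>v e k)) $ i\<bar> \<le> c * \<rho> ^ k * norm1 (e 0)"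
    using output_feedback_increment_exp_decay[OF K C ev] by blast
  have "\<bar>e k $ i\<bar> \<le> (1 + c / (1 - \<rho>)) * norm1 (e 0)"
    if e: "is_traj m (1\<^sub>m m - K * C) e" and i: "i < m" for e k i
  proof -
    have e0: "e 0 \<in> carrier_vec m" by (rule is_traj_carrier[OF e])
    have telescope: "e k $ i = e 0 $ i - (\<Sum>j<k. (K *\<^sub>v (C *\<^sub>v e j)) $ i)"
    proof (induction k)
      case (Suc k)
      then show ?case
        using output_feedback_step[OF K C e, of k] is_traj_carrier[OF e, of k] K C i by simp
    qed simp
    have "\<bar>e k $ i\<bar> \<le> \<bar>e 0 $ i\<bar> + \<bar>\<Sum>j<k. (K *\<^sub>v (C *\<^sub>v e j)) $ i\<bar>"
      unfolding telescope by (rule abs_triangle_ineq4)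
    also have "\<dots> \<le> \<bar>e 0 $ i\<bar> + (\<Sum>j<k. \<bar>(K *\<^sub>v (C *\<^sub>v e j)) $ i\<bar>)"
      by (intro add_left_mono sum_abs)
    also have "\<dots> \<le> norm1 (e 0) + (\<Sum>j<k. c * norm1 (e 0) * \<rho> ^ j)"
      using abs_index_le_norm1[of i "e 0"] e0 i decay[OF e i]
      by (intro add_mono sum_mono) (auto simp: ac_simps)
    also have "(\<Sum>j<k. c * norm1 (e 0) * \<rho> ^ j) = c * norm1 (e 0) * ((1 - \<rho> ^ k) / (1 - \<rho>))"
      using \<rho> by (simp add: sum_distrib_left[symmetric] sum_gp_strict)
    also have "\<dots> \<le> c * norm1 (e 0) * (1 / (1 - \<rho>))"
      using c \<rho> norm1_nonneg[of "e 0"] by (intro mult_left_mono divide_right_mono) auto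
    finally show ?thesis by (simp add: algebra_simps)
  qed
  thus ?thesis by blast
qed

lemma lyapunov_stable_of_uniform_bound:
  assumes bound: "\<And>e k i. is_traj m M e \<Longrightarrow> i < m \<Longrightarrow> \<bar>e k $ i\<bar> \<le> Q * norm1 (e 0)"
  shows "\<forall>\<epsilon>>0. \<exists>\<delta>>0. \<forall>e. is_traj m M e \<longrightarrow>
    (\<forall>i < m. \<bar>e 0 $ i\<bar> < \<delta>) \<longrightarrow> (\<forall>k. \<forall>i < m. \<bar>e k $ i\<bar> < \<epsilon>)"
proof (intro allI impI)
  fix \<epsilon> :: real assume \<epsilon>: "\<epsilon> > 0"
  define N where "N = real m * \<bar>Q\<bar>"
  have N: "0 \<le> N" unfolding N_def by simp
  define \<delta> where "\<delta> = \<epsilon> / (N + 1)"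
  have "\<bar>e k $ i\<bar> < \<epsilon>" if e: "is_traj m M e" and small: "\<forall>i < m. \<bar>e 0 $ i\<bar> < \<delta>"
    and i: "i < m" for e k i
  proof -
    have "norm1 (e 0) = (\<Sum>j<m. \<bar>e 0 $ j\<bar>)" using is_traj_carrier[OF e, of 0] unfolding norm1_def by simp
    also have "\<dots> \<le> (\<Sum>j<m. \<delta>)" using small by (intro sum_mono) (auto intro: less_imp_le)
    finally have small1: "norm1 (e 0) \<le> real m * \<delta>" by simp
    have "Q * norm1 (e 0) \<le> \<bar>Q\<bar> * norm1 (e 0)" by (intro mult_right_mono norm1_nonneg) simp
    also have "\<dots> \<le> \<bar>Q\<bar> * (real m * \<delta>)" by (intro mult_left_mono small1) simp
    also have "\<dots> = \<epsilon> * (N / (N + 1))" unfolding N_def \<delta>_def using N by (simp add: field_simps)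
    also have "\<dots> < \<epsilon>" using \<epsilon> N by (simp add: field_simps)
    finally show ?thesis using bound[OF e i, of k] by linarith
  qed
  moreover have "\<delta> > 0" unfolding \<delta>_def using \<epsilon> N by simp
  ultimately show "\<exists>\<delta>>0. \<forall>e. is_traj m M e \<longrightarrow>
    (\<forall>i < m. \<bar>e 0 $ i\<bar> < \<delta>) \<longrightarrow> (\<forall>k. \<forall>i < m. \<bar>e k $ i\<bar> < \<epsilon>)" by blast
qed

section \<open>Selection matrices\<close>

lemma GammaL_carrier [simp]: "GammaL c L \<in> carrier_mat c (length L)"
  by (simp add: GammaL_def)

lemma GammaL_dims [simp]: "dim_row (GammaL c L) = c" "dim_col (GammaL c L) = length L"
  by (simp_all add: GammaL_def)

lemma GammaL_index [simp]:
  "i < c \<Longrightarrow> j < length L \<Longrightarrow> GammaL c L $$ (i, j) = (if i + 1 = L ! j then 1 else 0)"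
  by (simp add: GammaL_def)

lemma sum_indicator_Suc_eq:
  fixes p c :: nat
  assumes "1 \<le> p" "p \<le> c"
  shows "(\<Sum>a = 0..<c. (if a + 1 = p then 1 else 0) * f a) = (f (p - 1) :: 'a :: semiring_1)"
proof -
  have "a + 1 = p \<longleftrightarrow> a = p - 1" for a using assms by arith
  hence "(\<Sum>a = 0..<c. (if a + 1 = p then 1 else 0) * f a) = (\<Sum>a = 0..<c. if a = p - 1 then f a else 0)"
    by (intro sum.cong) auto
  also have "\<dots> = f (p - 1)" using assms by auto
  finally show ?thesis .
qed

lemma transpose_GammaL_mult_GammaL:
  assumes "distinct L" and "set L \<subseteq> {1..c}"
  shows "transpose_mat (GammaL c L) * GammaL c L = 1\<^sub>m (length L)"
proof (rule eq_matI)
  fix i j assume "i < dim_row (1\<^sub>m (length L))" "j < dim_col (1\<^sub>m (length L))"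
  hence ij: "i < length L" "j < length L" by auto
  with assms(2) have p: "1 \<le> L ! i" "L ! i \<le> c" using nth_mem by fastforce+
  have "(transpose_mat (GammaL c L) * GammaL c L) $$ (i, j)
      = (\<Sum>a = 0..<c. (if a + 1 = L ! i then 1 else 0) * (if a + 1 = L ! j then 1 else 0))"
    using ij by (simp add: scalar_prod_def)
  also have "\<dots> = (if L ! i = L ! j then 1 else 0)"
    using sum_indicator_Suc_eq[OF p, of "\<lambda>a. if a + 1 = L ! j then 1 else 0"] p by simp
  also have "\<dots> = 1\<^sub>m (length L) $$ (i, j)" using ij assms(1) by (simp add: nth_eq_iff_index_eq)
  finally show "(transpose_mat (GammaL c L) * GammaL c L) $$ (i, j) = 1\<^sub>m (length L) $$ (i, j)" .
qed auto

lemma GammaL_mult_transpose_GammaL: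
  assumes L: "distinct L" and "set L = {1..c}"
  shows "GammaL c L * transpose_mat (GammaL c L) = 1\<^sub>m c"
proof (rule eq_matI)
  fix a a' assume "a < dim_row (1\<^sub>m c)" "a' < dim_col (1\<^sub>m c)"
  hence aa: "a < c" "a' < c" by auto
  with assms(2) obtain b0 where b0: "b0 < length L" "L ! b0 = a + 1"
    by (metis atLeastAtMost_iff in_set_conv_nth le_add2 less_eq_Suc_le Suc_eq_plus1)
  have "a + 1 = L ! b \<longleftrightarrow> b = b0" if "b < length L" for b
    using b0 L that by (metis nth_eq_iff_index_eq)
  hence "(\<Sum>b = 0..<length L. (if a + 1 = L ! b then 1 else 0) * (if a' + 1 = L ! b then 1 else 0))
      = (\<Sum>b = 0..<length L. if b = b0 then (if a' = a then 1 else 0) else (0 :: real))"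
    using b0 by (intro sum.cong) auto
  hence "(GammaL c L * transpose_mat (GammaL c L)) $$ (a, a')
      = (\<Sum>b = 0..<length L. if b = b0 then (if a' = a then 1 else 0) else 0)"
    using aa by (simp add: scalar_prod_def)
  also have "\<dots> = 1\<^sub>m c $$ (a, a')" using b0 aa by simp
  finally show "(GammaL c L * transpose_mat (GammaL c L)) $$ (a, a') = 1\<^sub>m c $$ (a, a')" .
qed auto

lemma GammaL_mult_GammaL_upt:
  assumes k: "k \<le> length L"
  shows "GammaL c L * GammaL (length L) [1..<k+1] = GammaL c (take k L)"
proof (rule eq_matI)
  fix a b assume "a < dim_row (GammaL c (take k L))" "b < dim_col (GammaL c (take k L))"
  hence ab: "a < c" "b < k" using k by auto
  hence "[1..<k+1] ! b = b + 1" by (simp del: upt_Suc add: nth_upt)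
  with ab k show "(GammaL c L * GammaL (length L) [1..<k+1]) $$ (a, b) = GammaL c (take k L) $$ (a, b)"
    by (simp add: scalar_prod_def if_distrib[where f = "\<lambda>x. _ * x"] cong: if_cong)
qed (use k in auto)

lemma index_transpose_GammaL_mult_vec:
  assumes l: "l < length L" and "L ! l \<in> {1..c}" and v: "v \<in> carrier_vec c"
  shows "(transpose_mat (GammaL c L) *\<^sub>v v) $ l = v $ (L ! l - 1)"
  using sum_indicator_Suc_eq[of "L ! l" c "\<lambda>a. v $ a"] assms by (simp add: scalar_prod_def)

lemma the_mat_inverse_eq:
  assumes T: "(T :: 'a :: field mat) \<in> carrier_mat n n" and U: "U \<in> carrier_mat n n"
    and TU: "T * U = 1\<^sub>m n" and UT: "U * T = 1\<^sub>m n"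
  shows "the (mat_inverse T) = U"
proof (cases "mat_inverse T")
  case None
  have "T \<in> Units (ring_mat TYPE('a) n n)"
    using T U TU UT unfolding Units_def ring_mat_def by auto
  with mat_inverse(1)[OF T None, of n] show ?thesis by blast
next
  case (Some V)
  from mat_inverse(2)[OF T Some] have V: "T * V = 1\<^sub>m n" "V \<in> carrier_mat n n" by auto
  have "U = U * (T * V)" using U V by simp
  also have "\<dots> = (U * T) * V" using assoc_mult_mat[OF U T V(2)] by simp
  also have "\<dots> = V" using UT V by simp
  finally show ?thesis using Some by simp
qed

section \<open>The reduced network model\<close>

lemma Dset_subset:
  assumes "S1 \<subseteq> {1..n}"
  shows "Dset n S1 \<subseteq> {1..2*n}"
  using assms unfolding Dset_def by auto

lemma card_Dset:
  assumes S1: "S1 \<subseteq> {1..n}"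
  shows "card (Dset n S1) = 2 * card S1"
proof -
  have fin: "finite S1" using S1 finite_subset by blast
  have "(\<lambda>i. i + n) ` S1 \<subseteq> {n<..}" using S1 by auto
  with S1 have "S1 \<inter> (\<lambda>i. i + n) ` S1 = {}" by fastforce
  hence "card (Dset n S1) = card S1 + card ((\<lambda>i. i + n) ` S1)"
    unfolding Dset_def using fin by (intro card_Un_disjoint) auto
  also have "card ((\<lambda>i. i + n) ` S1) = card S1" by (rule card_image) (auto simp: inj_on_def)
  finally show ?thesis by simp
qed

lemma Bmat_carrier:
  assumes "D1 \<subseteq> {1..n}"
  shows "Bmat n par r x D1 \<in> carrier_mat (2*n) (card (Dset n D1))"
proof -
  have "path_mat n par r * Gamma n D1 \<in> carrier_mat n (card D1)" for r
    unfolding path_mat_def Gamma_def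
    using GammaL_carrier[of n "sorted_list_of_set D1"] by (intro mult_carrier_mat) auto
  thus ?thesis
    unfolding Bmat_def Let_def card_Dset[OF assms] mult_2 by (intro four_block_carrier_mat smult_carrier_mat)
qed

lemma Cmat_eq: "Cmat n S1 = transpose_mat (GammaL (2*n) (sorted_list_of_set (Dset n S1)))"
  unfolding Cmat_def Gamma_def ..

lemma Cmat_carrier: "Cmat n S1 \<in> carrier_mat (card (Dset n S1)) (2*n)"
  unfolding Cmat_eq using GammaL_carrier[of "2*n" "sorted_list_of_set (Dset n S1)"] by simp

lemma index_Cmat_mult_vec:
  assumes S1: "S1 \<subseteq> {1..n}" and p: "p \<in> Dset n S1"
  obtains l where "l < card (Dset n S1)"
    and "\<And>v. v \<in> carrier_vec (2*n) \<Longrightarrow> (Cmat n S1 *\<^sub>v v) $ l = v $ (p - 1)"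
proof -
  define xs where "xs = sorted_list_of_set (Dset n S1)"
  have fin: "finite (Dset n S1)" using Dset_subset[OF S1] finite_subset by blast
  with p obtain l where l: "l < length xs" "xs ! l = p"
    unfolding xs_def by (metis in_set_conv_nth set_sorted_list_of_set)
  with p Dset_subset[OF S1] have "xs ! l \<in> {1..2*n}" by auto
  from index_transpose_GammaL_mult_vec[OF l(1) this] l that show ?thesis
    unfolding Cmat_eq xs_def[symmetric] by (simp add: xs_def)
qed

lemma Gmat_carrier: "Gmat n s \<in> carrier_mat (2*n) s"
  unfolding Gmat_def Gamma_def by auto

lemma Tmat_eq_GammaL_append:
  assumes S1: "S1 \<subseteq> {1..n}" and SD: "Dset n S1 \<subseteq> Dset n D1"
  obtains ys where "Tmat n D1 S1 = GammaL (2*n) (sorted_list_of_set (Dset n S1) @ ys)"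
    and "distinct (sorted_list_of_set (Dset n S1) @ ys)"
    and "set (sorted_list_of_set (Dset n S1) @ ys) = {1..2*n}"
proof -
  define S D U where "S = Dset n S1" and "D = Dset n D1" and "U = {1..2*n}"
  define ys where "ys = sorted_list_of_set ((U - S) \<inter> D) @ sorted_list_of_set ((U - S) \<inter> (U - D))"
  have SU: "S \<subseteq> U" and "finite U" using Dset_subset[OF S1] unfolding S_def U_def by auto
  hence fin: "finite S" "finite ((U - S) \<inter> D)" "finite ((U - S) \<inter> (U - D))" by (auto intro: finite_subset)
  have "S \<inter> D = S" "S \<inter> (U - D) = {}" using SD unfolding S_def D_def by auto
  hence "Tmat n D1 S1 = GammaL (2*n) (sorted_list_of_set S @ ys)"
    unfolding Tmat_def Let_def S_def D_def U_def ys_def by simp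
  moreover have "distinct (sorted_list_of_set S @ ys)" using fin unfolding ys_def by auto
  moreover have "set (sorted_list_of_set S @ ys) = U" using fin SU unfolding ys_def by auto
  ultimately show ?thesis using that unfolding S_def U_def by blast
qed

lemma Tmat_carrier:
  assumes S1: "S1 \<subseteq> {1..n}" and SD: "Dset n S1 \<subseteq> Dset n D1"
  shows "Tmat n D1 S1 \<in> carrier_mat (2*n) (2*n)"
proof -
  obtain L where T: "Tmat n D1 S1 = GammaL (2*n) L" and L: "distinct L" "set L = {1..2*n}"
    using Tmat_eq_GammaL_append[OF S1 SD] by metis
  show ?thesis using distinct_card[OF L(1)] L(2) unfolding T by simp
qed

lemma Tmat_inverse:
  assumes S1: "S1 \<subseteq> {1..n}" and SD: "Dset n S1 \<subseteq> Dset n D1"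
  shows "the (mat_inverse (Tmat n D1 S1)) = transpose_mat (Tmat n D1 S1)"
proof -
  obtain L where T: "Tmat n D1 S1 = GammaL (2*n) L" and L: "distinct L" "set L = {1..2*n}"
    using Tmat_eq_GammaL_append[OF S1 SD] by metis
  have "length L = 2*n" using distinct_card[OF L(1)] L(2) by simp
  with L transpose_GammaL_mult_GammaL[OF L(1)] GammaL_mult_transpose_GammaL[OF L] show ?thesis
    unfolding T by (intro the_mat_inverse_eq) auto
qed

lemma Tmat_mult_Gmat:
  assumes S1: "S1 \<subseteq> {1..n}" and SD: "Dset n S1 \<subseteq> Dset n D1"
  shows "Tmat n D1 S1 * Gmat n (card (Dset n S1)) = transpose_mat (Cmat n S1)"
proof -
  define xs where "xs = sorted_list_of_set (Dset n S1)"
  obtain ys where T: "Tmat n D1 S1 = GammaL (2*n) (xs @ ys)"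
    and L: "distinct (xs @ ys)" "set (xs @ ys) = {1..2*n}"
    using Tmat_eq_GammaL_append[OF S1 SD] unfolding xs_def by metis
  have len: "length (xs @ ys) = 2*n" using distinct_card[OF L(1)] L(2) by simp
  have "{1..card (Dset n S1)} = {1..<length xs + 1}" unfolding xs_def by auto
  hence "Gmat n (card (Dset n S1)) = GammaL (length (xs @ ys)) [1..<length xs + 1]"
    unfolding Gmat_def Gamma_def len by simp
  with GammaL_mult_GammaL_upt[of "length xs" "xs @ ys" "2*n"] show ?thesis
    unfolding T Cmat_eq xs_def[symmetric] by simp
qed

lemma Cbar_eq_one:
  assumes S1: "S1 \<subseteq> {1..n}" and SD: "Dset n S1 \<subseteq> Dset n D1"
  shows "Cbar n D1 S1 = 1\<^sub>m (card (Dset n S1))"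
proof -
  have "Cbar n D1 S1 = Cmat n S1 * transpose_mat (Cmat n S1)"
    unfolding Cbar_def using assoc_mult_mat[OF Cmat_carrier Tmat_carrier[OF S1 SD] Gmat_carrier]
      Tmat_mult_Gmat[OF S1 SD] by simp
  also have "\<dots> = 1\<^sub>m (card (Dset n S1))"
    unfolding Cmat_eq transpose_transpose using Dset_subset[OF S1] finite_subset[OF Dset_subset[OF S1]]
    by (subst transpose_GammaL_mult_GammaL) auto
  finally show ?thesis .
qed

lemma Bbar_eq_Cmat_mult_Bmat:
  assumes S1: "S1 \<subseteq> {1..n}" and SD: "Dset n S1 \<subseteq> Dset n D1"
  shows "Bbar n par r x D1 S1 = Cmat n S1 * Bmat n par r x D1"
proof -
  have "transpose_mat (Gmat n (card (Dset n S1))) * the (mat_inverse (Tmat n D1 S1))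
      = transpose_mat (Tmat n D1 S1 * Gmat n (card (Dset n S1)))"
    unfolding Tmat_inverse[OF S1 SD] by (rule transpose_mult[OF Tmat_carrier[OF S1 SD] Gmat_carrier, symmetric])
  thus ?thesis unfolding Bbar_def Tmat_mult_Gmat[OF S1 SD] by simp
qed

lemma Bbar_mult_Cbar_eq:
  assumes D1: "D1 \<subseteq> {1..n}" and S1: "S1 \<subseteq> {1..n}" and SD: "Dset n S1 \<subseteq> Dset n D1"
    and F: "F \<in> carrier_mat (card (Dset n D1)) (card (Dset n S1))"
  shows "Bbar n par r x D1 S1 * (F * Cbar n D1 S1) = Cmat n S1 * (Bmat n par r x D1 * F)"
  using Cbar_eq_one[OF S1 SD] Bbar_eq_Cmat_mult_Bmat[OF S1 SD] F
    assoc_mult_mat[OF Cmat_carrier Bmat_carrier[OF D1] F]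
  by simp

theorem theorem2:
  fixes n :: nat and par :: "nat \<Rightarrow> nat" and r x :: "nat \<Rightarrow> real"
    and D1 S1 :: "nat set" and F :: "real mat"
  assumes n: "n \<ge> 1"
    and tree: "is_rooted_tree n par"
    and D1: "D1 \<subseteq> {1..n}" "D1 \<noteq> {}"
    and S1: "S1 \<subseteq> {1..n}" "S1 \<noteq> {}"
    and SD: "Dset n S1 \<subseteq> Dset n D1"
    and F: "F \<in> carrier_mat (card (Dset n D1)) (card (Dset n S1))"
    and eig: "\<And>mu. eigenvalue (map_mat complex_of_real
                 (Bbar n par r x D1 S1 * (F * Cbar n D1 S1))) mu \<Longrightarrow> cmod (mu - 1) < 1"
  shows
    "(\<forall>eb. is_traj (card (Dset n S1))
             (1\<^sub>m (card (Dset n S1)) - Bbar n par r x D1 S1 * (F * Cbar n D1 S1)) eb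
          \<longrightarrow> (\<forall>i < card (Dset n S1). exp_conv (\<lambda>k. eb k $ i)))
     \<and> (\<forall>\<epsilon>>0. \<exists>\<delta>>0. \<forall>e. is_traj (2*n) (1\<^sub>m (2*n) - Bmat n par r x D1 * F * Cmat n S1) e
          \<longrightarrow> (\<forall>i < 2*n. \<bar>e 0 $ i\<bar> < \<delta>) \<longrightarrow> (\<forall>k. \<forall>i < 2*n. \<bar>e k $ i\<bar> < \<epsilon>))
     \<and> (\<forall>e. is_traj (2*n) (1\<^sub>m (2*n) - Bmat n par r x D1 * F * Cmat n S1) e
          \<longrightarrow> (\<exists>M. \<forall>k. \<forall>i < 2*n. \<bar>e k $ i\<bar> \<le> M))
     \<and> (\<forall>e. is_traj (2*n) (1\<^sub>m (2*n) - Bmat n par r x D1 * F * Cmat n S1) e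
          \<longrightarrow> (\<forall>p \<in> Dset n S1. exp_conv (\<lambda>k. e k $ (p - 1))))"
proof -
  define s B C where "s = card (Dset n S1)" and "B = Bmat n par r x D1" and "C = Cmat n S1"
  have C: "C \<in> carrier_mat s (2*n)" unfolding C_def s_def by (rule Cmat_carrier)
  have K: "B * F \<in> carrier_mat (2*n) s"
    using mult_carrier_mat[OF Bmat_carrier[OF D1(1)] F] unfolding B_def s_def .
  note Hbar = Bbar_mult_Cbar_eq[OF D1(1) S1(1) SD F, of par r x, folded B_def C_def]
  have ev: "cmod mu < 1" if "eigenvalue (map_mat complex_of_real (1\<^sub>m s - C * (B * F))) mu" for mu
    using cmod_eigenvalue_one_minus_lt_1[OF mult_carrier_mat[OF C K] eig[unfolded Hbar] that] .
  have reduced: "exp_conv (\<lambda>k. y k $ i)" if "is_traj s (1\<^sub>m s - C * (B * F)) y" "i < s" for y i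
    using is_traj_exp_conv[OF minus_carrier_mat[OF mult_carrier_mat[OF C K]] ev that] .
  obtain Q where Q: "\<And>e k i. is_traj (2*n) (1\<^sub>m (2*n) - B * F * C) e \<Longrightarrow> i < 2*n \<Longrightarrow>
      \<bar>e k $ i\<bar> \<le> Q * norm1 (e 0)"
    using output_feedback_uniform_bound[OF K C ev] by blast
  have sensed: "exp_conv (\<lambda>k. e k $ (p - 1))"
    if e: "is_traj (2*n) (1\<^sub>m (2*n) - B * F * C) e" and p: "p \<in> Dset n S1" for e p
  proof -
    obtain l where l: "l < s" "\<And>v. v \<in> carrier_vec (2*n) \<Longrightarrow> (C *\<^sub>v v) $ l = v $ (p - 1)"
      using index_Cmat_mult_vec[OF S1(1) p] unfolding C_def s_def by blast
    have "(\<lambda>k. e k $ (p - 1)) = (\<lambda>k. (C *\<^sub>v e k) $ l)" using l(2) is_traj_carrier[OF e] by simp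
    with reduced[OF output_feedback_output_traj[OF K C e] l(1)] show ?thesis by simp
  qed
  show ?thesis
    unfolding Hbar s_def[symmetric] B_def[symmetric] C_def[symmetric]
    using reduced lyapunov_stable_of_uniform_bound[OF Q] Q sensed by blast
qed

end
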